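(* Let $R$ be a commutative ring, let $n$ be a power of $2$, and let $A,B\in R[x]$ be polynomials of degree $n-1$. For an integer $m\ge1$ write $\ell(m)=\lfloor\log_2 m\rfloor$. Then $$A(x)B(x)=\frac{1-x^n}{1-x}\bigl(A(x)\odot B(x)\bigr)-\sum_{m=1}^{n-1}\frac{1-x^{2^{\ell(m)}}}{(1-x)\,x^m}\,U_m(x)\,V_m(x),$$ where $$U_m(x)=\Bigl(\frac{(1-x^n)\,x^m}{1-x^{2^{\ell(m)+1}}}\Bigr)\odot\Bigl(\bigl(1-x^{2^{\ell(m)}}\bigr)A(x)\Bigr),\qquad V_m(x)=\Bigl(\frac{(1-x^n)\,x^m}{1-x^{2^{\ell(m)+1}}}\Bigr)\odot\Bigl(\bigl(1-x^{2^{\ell(m)}}\bigr)B(x)\Bigr).$$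
   Context: For formal power series (in particular polynomials) $P=\sum_i p_ix^i$ and $Q=\sum_i q_ix^i$, the termwise product is $P\odot Q=\sum_i p_iq_ix^i$. The quotients $\frac{1-x^n}{1-x}=1+x+\dots+x^{n-1}$, $\frac{1-x^n}{1-x^{2^{j}}}=\sum_{i=0}^{n/2^j-1}x^{i2^j}$ (for $2^j\le n$) and $\frac{1-x^{2^j}}{1-x}=1+x+\dots+x^{2^j-1}$ denote the corresponding polynomials; the division by $x^m$ is exact since $U_m$ and $V_m$ are divisible by $x^m$. *)

theory Defs
  imports "HOL-Computational_Algebra.Polynomial" "HOL-Library.Discrete_Functions"
begin

definition termwise :: "'a::comm_ring_1 poly \<Rightarrow> 'a poly \<Rightarrow> 'a poly" (infixl "\<odot>" 70)
  where "P \<odot> Q = Poly (map (\<lambda>i. coeff P i * coeff Q i) [0..<Suc (degree P)])"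

text \<open>(1 - x^n)/(1 - x) = 1 + x + ... + x^(n-1).\<close>
definition geom :: "nat \<Rightarrow> 'a::comm_ring_1 poly"
  where "geom n = (\<Sum>i<n. monom 1 i)"

text \<open>(1 - x^n)/(1 - x^(2^j)) = sum over i < n/2^j of x^(i*2^j).\<close>
definition geom_step :: "nat \<Rightarrow> nat \<Rightarrow> 'a::comm_ring_1 poly"
  where "geom_step n j = (\<Sum>i< n div 2^j. monom 1 (i * 2^j))"

text \<open>Exact division by x^m: drop the lowest m coefficients.\<close>
definition div_xpow :: "'a::comm_ring_1 poly \<Rightarrow> nat \<Rightarrow> 'a poly"
  where "div_xpow P m = poly_shift m P"

definition U_poly :: "nat \<Rightarrow> nat \<Rightarrow> 'a::comm_ring_1 poly \<Rightarrow> 'a poly"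
  where "U_poly n m A =
     (monom 1 m * geom_step n (floor_log m + 1)) \<odot> ((1 - monom 1 (2 ^ floor_log m)) * A)"

end

theory Submission
  imports Defs
begin

(* Induction on k, halving n = 2h. Write A = A_e(x^2) + x A_o(x^2), and B likewise. Then
   U_n,2m(A) = U_h,m(A_e)(x^2), U_n,2m+1(A) = x U_h,m(A_o)(x^2), U_n,1(A) = x (A_o - A_e)(x^2),
   and (1 - x^2h)/(1 - x) = (1 + x) (1 - y^h)/(1 - y) at y = x^2, so the correction terms for n
   regroup into those for the half-size products A_e B_e and A_o B_o plus
   x ((A_o - A_e)(B_o - B_e))(x^2). The induction hypothesis for these two products closes the
   step through the Karatsuba identity
   (e + x v)(e' + x v') = (1 + x)(e e' + x v v') - x (v - e)(v' - e'). *)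

abbreviation X :: "'a::comm_semiring_1 poly" where "X \<equiv> monom 1 1"

definition sq_subst :: "'a::comm_semiring_1 poly \<Rightarrow> 'a poly"
  where "sq_subst p = pcompose p [:0, 0, 1:]"

definition even_coeffs :: "'a::zero poly \<Rightarrow> 'a poly"
  where "even_coeffs A = Abs_poly (\<lambda>i. coeff A (2 * i))"

definition odd_coeffs :: "'a::zero poly \<Rightarrow> 'a poly"
  where "odd_coeffs A = Abs_poly (\<lambda>i. coeff A (2 * i + 1))"

lemma coeff_even_coeffs [simp]: "coeff (even_coeffs A) i = coeff A (2 * i)"
  unfolding even_coeffs_def by (subst coeff_Abs_poly[of "degree A"]) (auto intro: coeff_eq_0)

lemma coeff_odd_coeffs [simp]: "coeff (odd_coeffs A) i = coeff A (2 * i + 1)"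
  unfolding odd_coeffs_def by (subst coeff_Abs_poly[of "degree A"]) (auto intro: coeff_eq_0)

lemma degree_even_coeffs_less: "degree A < 2 * h \<Longrightarrow> degree (even_coeffs A) < h"
  by (rule degree_lessI) (auto intro: coeff_eq_0)

lemma degree_odd_coeffs_less: "degree A < 2 * h \<Longrightarrow> degree (odd_coeffs A) < h"
  by (rule degree_lessI) (auto intro: coeff_eq_0)

lemma coeff_X_mult: "coeff (X * p) t = (if t = 0 then 0 else coeff p (t - 1))"
  by (simp add: coeff_monom_mult)

lemma coeff_one_plus_X_mult:
  "coeff ((1 + X) * p) t = coeff p t + (if t = 0 then 0 else coeff p (t - 1))"
  by (simp add: distrib_right coeff_monom_mult)

lemma coeff_sq_subst: "coeff (sq_subst p) t = (if even t then coeff p (t div 2) else 0)"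
  unfolding sq_subst_def
proof (induction p arbitrary: t)
  case (pCons a p)
  then show ?case
    by (auto simp: pcompose_pCons coeff_pCons split: nat.split)
qed simp

lemma sq_subst_mult: "sq_subst (p * q) = sq_subst p * sq_subst q"
  unfolding sq_subst_def by (rule pcompose_mult)

lemma sq_subst_diff:
  fixes p q :: "'a::comm_ring_1 poly"
  shows "sq_subst (p - q) = sq_subst p - sq_subst q"
  unfolding sq_subst_def by (rule pcompose_diff)

lemma sq_subst_sum: "sq_subst (sum f S) = (\<Sum>i\<in>S. sq_subst (f i))"
  unfolding sq_subst_def by (rule pcompose_sum)

lemma even_odd_decomp: "A = sq_subst (even_coeffs A) + X * sq_subst (odd_coeffs A)"
proof (rule poly_eqI)
  show "coeff A t = coeff (sq_subst (even_coeffs A) + X * sq_subst (odd_coeffs A)) t" for t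
    unfolding coeff_add coeff_X_mult coeff_sq_subst by (cases "even t") (auto elim!: evenE oddE)
qed

lemma coeff_termwise: "coeff (P \<odot> Q) i = coeff P i * coeff Q i"
  unfolding termwise_def
  by (cases "i \<le> degree P") (auto simp: nth_default_def coeff_eq_0 simp del: upt_Suc)

lemma termwise_even_odd_decomp:
  "A \<odot> B = sq_subst (even_coeffs A \<odot> even_coeffs B) + X * sq_subst (odd_coeffs A \<odot> odd_coeffs B)"
proof (rule poly_eqI)
  show "coeff (A \<odot> B) t = coeff (sq_subst (even_coeffs A \<odot> even_coeffs B)
      + X * sq_subst (odd_coeffs A \<odot> odd_coeffs B)) t" for t
    unfolding coeff_add coeff_X_mult coeff_sq_subst coeff_termwise
    by (cases "even t") (auto elim!: evenE oddE)
qed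

lemma coeff_geom: "coeff (geom n) t = (if t < n then 1 else 0)"
  unfolding geom_def by (simp add: coeff_sum coeff_monom)

lemma geom_double: "geom (2 * h) = (1 + X) * sq_subst (geom h)"
proof (rule poly_eqI)
  show "coeff (geom (2 * h)) t = coeff ((1 + X) * sq_subst (geom h)) t" for t
    unfolding coeff_one_plus_X_mult coeff_sq_subst coeff_geom
    by (cases "even t") (auto elim!: evenE oddE)
qed

(* The exponents m + i d with i < n div d: the support of x^m (1 - x^n)/(1 - x^d). *)
definition on_grid :: "nat \<Rightarrow> nat \<Rightarrow> nat \<Rightarrow> nat \<Rightarrow> bool"
  where "on_grid n d m t \<longleftrightarrow> m \<le> t \<and> d dvd t - m \<and> (t - m) div d < n div d"

lemma coeff_shifted_geom_step:
  "coeff (monom 1 m * geom_step n j) t = (if on_grid n (2 ^ j) m t then 1 else 0)"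
proof -
  have step: "coeff (geom_step n j) s
      = (if 2 ^ j dvd s \<and> s div 2 ^ j < n div 2 ^ j then 1 else 0)" for s
  proof -
    have "coeff (geom_step n j) s
        = (\<Sum>i<n div 2 ^ j. if i = s div 2 ^ j \<and> 2 ^ j dvd s then 1 else 0)"
      unfolding geom_step_def coeff_sum by (rule sum.cong) (auto simp: coeff_monom)
    then show ?thesis by (auto simp: sum.delta)
  qed
  show ?thesis by (simp add: coeff_monom_mult on_grid_def step)
qed

lemma on_grid_double_even:
  "on_grid (2 * n) (2 * d) (2 * m) (2 * u) \<longleftrightarrow> on_grid n d m u"
proof -
  have "2 * u - 2 * m = 2 * (u - m)" by simp
  then show ?thesis unfolding on_grid_def by (simp only: mult_le_cancel1) simp
qed

lemma on_grid_double_odd: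
  "on_grid (2 * n) (2 * d) (2 * m + 1) (2 * u + 1) \<longleftrightarrow> on_grid n d m u"
  using on_grid_double_even[of n d m u] by (simp add: on_grid_def)

lemma on_grid_parity: "on_grid n (2 * d) m t \<Longrightarrow> even t \<longleftrightarrow> even m"
proof -
  assume "on_grid n (2 * d) m t"
  then have "m \<le> t" "even (t - m)"
    unfolding on_grid_def by (auto dest: dvd_mult_left)
  then show ?thesis by (metis even_add le_add_diff_inverse)
qed

lemma coeff_U_poly:
  assumes "m \<ge> 1"
  shows "coeff (U_poly n m A) t = (if on_grid n (2 * 2 ^ floor_log m) m t
    then coeff A t - coeff A (t - 2 ^ floor_log m) else 0)"
proof -
  have "2 ^ floor_log m \<le> m" using floor_log_exp2_le[of m] assms by simp
  moreover have "coeff ((1 - monom 1 s) * A) t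
      = coeff A t - (if t < s then 0 else coeff A (t - s))" for s
    by (simp add: left_diff_distrib coeff_monom_mult)
  ultimately show ?thesis
    unfolding U_poly_def coeff_termwise coeff_shifted_geom_step power_Suc
    by (auto simp: on_grid_def)
qed

lemma U_poly_even_index:
  assumes "m \<ge> 1"
  shows "U_poly (2 * h) (2 * m) A = sq_subst (U_poly h m (even_coeffs A))"
proof (rule poly_eqI)
  fix t
  define s where "s = (2::nat) ^ floor_log m"
  have s: "s \<le> m" using floor_log_exp2_le[of m] assms by (simp add: s_def)
  have pow: "2 ^ floor_log (2 * m) = 2 * s" using assms by (simp add: s_def)
  have m2: "2 * m \<ge> 1" using assms by simp
  show "coeff (U_poly (2 * h) (2 * m) A) t = coeff (sq_subst (U_poly h m (even_coeffs A))) t"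
  proof (cases "even t")
    case True
    then obtain u where u: "t = 2 * u" ..
    have "2 * u - 2 * s = 2 * (u - s)" by simp
    then show ?thesis
      unfolding coeff_sq_subst coeff_U_poly[OF assms] coeff_U_poly[OF m2] pow u
        on_grid_double_even
      by (simp flip: s_def)
  next
    case False
    then have "\<not> on_grid (2 * h) (2 * (2 * s)) (2 * m) t"
      using on_grid_parity[of "2 * h" "2 * s" "2 * m" t] by auto
    then show ?thesis by (simp add: coeff_sq_subst coeff_U_poly[OF m2] pow False)
  qed
qed

lemma U_poly_odd_index:
  assumes "m \<ge> 1"
  shows "U_poly (2 * h) (2 * m + 1) A = X * sq_subst (U_poly h m (odd_coeffs A))"
proof (rule poly_eqI)
  fix t
  define s where "s = (2::nat) ^ floor_log m"
  have s: "s \<le> m" using floor_log_exp2_le[of m] assms by (simp add: s_def)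
  have pow: "2 ^ floor_log (2 * m + 1) = 2 * s"
    using floor_log_rec[of "2 * m + 1"] assms by (simp add: s_def)
  have m2: "2 * m + 1 \<ge> 1" by simp
  show "coeff (U_poly (2 * h) (2 * m + 1) A) t = coeff (X * sq_subst (U_poly h m (odd_coeffs A))) t"
  proof (cases "even t")
    case False
    then obtain u where u: "t = 2 * u + 1" by (rule oddE)
    have "2 * u + 1 - 2 * s = 2 * (u - s) + 1" if "on_grid h (2 * s) m u"
      using that s unfolding on_grid_def by linarith
    then show ?thesis
      unfolding coeff_X_mult coeff_sq_subst coeff_U_poly[OF assms] coeff_U_poly[OF m2] pow u
        on_grid_double_odd
      by (simp flip: s_def)
  next
    case True
    then have "\<not> on_grid (2 * h) (2 * (2 * s)) (2 * m + 1) t"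
      using on_grid_parity[of "2 * h" "2 * s" "2 * m + 1" t] by auto
    moreover have "odd (t - 1)" if "t \<noteq> 0" using True that by simp
    ultimately show ?thesis
      unfolding coeff_X_mult coeff_sq_subst coeff_U_poly[OF m2] pow by simp
  qed
qed

lemma U_poly_index_one:
  assumes "degree A < 2 * h"
  shows "U_poly (2 * h) 1 A = X * sq_subst (odd_coeffs A - even_coeffs A)"
proof (rule poly_eqI)
  fix t
  show "coeff (U_poly (2 * h) 1 A) t = coeff (X * sq_subst (odd_coeffs A - even_coeffs A)) t"
  proof (cases "even t")
    case False
    then obtain u where u: "t = 2 * u + 1" by (rule oddE)
    have "coeff A (2 * u + 1) = 0" "coeff A (2 * u) = 0" if "\<not> u < h"
      using that assms by (auto intro!: coeff_eq_0)
    then show ?thesis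
      unfolding coeff_X_mult coeff_sq_subst by (auto simp: coeff_U_poly u on_grid_def)
  next
    case True
    moreover have "odd (t - 1)" if "t \<noteq> 0" using True that by simp
    ultimately show ?thesis
      unfolding coeff_X_mult coeff_sq_subst by (auto simp: coeff_U_poly on_grid_def)
  qed
qed

lemma coeff_U_poly_below:
  "m \<ge> 1 \<Longrightarrow> i < m \<Longrightarrow> coeff (U_poly n m A) i = 0"
  by (simp add: coeff_U_poly on_grid_def)

lemma coeff_mult_below:
  fixes P R :: "'a::comm_semiring_0 poly"
  assumes "\<And>i. i < m \<Longrightarrow> coeff P i = 0" "i < m"
  shows "coeff (R * P) i = 0"
  unfolding coeff_mult using assms by (intro sum.neutral) auto

lemma poly_shift_even_sq_subst:
  fixes Q :: "'a::comm_semiring_1 poly"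
  shows "poly_shift (2 * m) ((1 + X) * sq_subst Q) = (1 + X) * sq_subst (poly_shift m Q)"
proof (rule poly_eqI)
  show "coeff (poly_shift (2 * m) ((1 + X) * sq_subst Q)) t
      = coeff ((1 + X) * sq_subst (poly_shift m Q)) t" for t
    unfolding coeff_poly_shift coeff_one_plus_X_mult coeff_sq_subst
    by (cases "even t") (auto elim!: evenE oddE simp: algebra_simps)
qed

(* The shift moves coeff Q (m - 1), the coefficient of x^(2m+1) on the left, to the constant term. *)
lemma poly_shift_odd_sq_subst:
  fixes Q :: "'a::comm_semiring_1 poly"
  assumes "\<And>i. i < m \<Longrightarrow> coeff Q i = 0"
  shows "poly_shift (2 * m + 1) ((1 + X) * (X * (X * sq_subst Q)))
    = (1 + X) * (X * sq_subst (poly_shift m Q))"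
proof (rule poly_eqI)
  fix t :: nat
  consider "t = 0" | u where "t = 2 * u + 1" | u where "t = 2 * u + 2"
  proof -
    have "t = 0 \<or> (\<exists>u. t = 2 * u + 1) \<or> (\<exists>u. t = 2 * u + 2)" by presburger
    then show thesis using that by blast
  qed
  then show "coeff (poly_shift (2 * m + 1) ((1 + X) * (X * (X * sq_subst Q)))) t
      = coeff ((1 + X) * (X * sq_subst (poly_shift m Q))) t"
  proof cases
    case 1
    then show ?thesis
      unfolding coeff_poly_shift coeff_one_plus_X_mult coeff_X_mult coeff_sq_subst
      using assms[of "m - 1"] by (cases m) (auto simp: algebra_simps)
  qed (unfold coeff_poly_shift coeff_one_plus_X_mult coeff_X_mult coeff_sq_subst,
       auto simp: algebra_simps)
qed

definition correction :: "nat \<Rightarrow> nat \<Rightarrow> 'a::comm_ring_1 poly \<Rightarrow> 'a poly \<Rightarrow> 'a poly"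
  where "correction n m A B = div_xpow (geom (2 ^ floor_log m) * U_poly n m A * U_poly n m B) m"

lemma correction_even_index:
  assumes "m \<ge> 1"
  shows "correction (2 * h) (2 * m) A B
    = (1 + X) * sq_subst (correction h m (even_coeffs A) (even_coeffs B))"
proof -
  have geom: "geom (2 ^ floor_log (2 * m)) = (1 + X) * sq_subst (geom (2 ^ floor_log m))"
    using assms geom_double[of "2 ^ floor_log m"] by simp
  have prod: "geom (2 ^ floor_log (2 * m)) * U_poly (2 * h) (2 * m) A * U_poly (2 * h) (2 * m) B
     = (1 + X) * sq_subst (geom (2 ^ floor_log m)
         * U_poly h m (even_coeffs A) * U_poly h m (even_coeffs B))"
    unfolding geom U_poly_even_index[OF assms] sq_subst_mult by (simp add: mult.assoc)
  show ?thesis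
    unfolding correction_def div_xpow_def prod poly_shift_even_sq_subst ..
qed

lemma correction_odd_index:
  assumes "m \<ge> 1"
  shows "correction (2 * h) (2 * m + 1) A B
    = (1 + X) * (X * sq_subst (correction h m (odd_coeffs A) (odd_coeffs B)))"
proof -
  define Q where "Q = geom (2 ^ floor_log m) * U_poly h m (odd_coeffs A) * U_poly h m (odd_coeffs B)"
  have geom: "geom (2 ^ floor_log (2 * m + 1)) = (1 + X) * sq_subst (geom (2 ^ floor_log m))"
    using assms geom_double[of "2 ^ floor_log m"] floor_log_rec[of "2 * m + 1"] by simp
  have prod: "geom (2 ^ floor_log (2 * m + 1)) * U_poly (2 * h) (2 * m + 1) A
      * U_poly (2 * h) (2 * m + 1) B = (1 + X) * (X * (X * sq_subst Q))"
    unfolding geom U_poly_odd_index[OF assms] Q_def sq_subst_mult by (simp add: algebra_simps)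
  have low: "coeff Q i = 0" if "i < m" for i
    unfolding Q_def using coeff_mult_below[OF coeff_U_poly_below[OF assms] that] .
  have "poly_shift (2 * m + 1) ((1 + X) * (X * (X * sq_subst Q)))
      = (1 + X) * (X * sq_subst (poly_shift m Q))"
    by (rule poly_shift_odd_sq_subst[OF low])
  then show ?thesis
    unfolding correction_def div_xpow_def prod by (simp only: Q_def)
qed

lemma correction_index_one:
  assumes "degree A < 2 * h" "degree B < 2 * h"
  shows "correction (2 * h) 1 A B
    = X * sq_subst ((odd_coeffs A - even_coeffs A) * (odd_coeffs B - even_coeffs B))"
proof -
  have shift: "poly_shift 1 (X * (X * R)) = X * R" for R :: "'a poly"
    by (rule poly_eqI) (simp add: coeff_poly_shift coeff_monom_mult)
  have prod: "geom 1 * (X * sq_subst (odd_coeffs A - even_coeffs A))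
      * (X * sq_subst (odd_coeffs B - even_coeffs B))
    = X * (X * sq_subst ((odd_coeffs A - even_coeffs A) * (odd_coeffs B - even_coeffs B)))"
    by (simp add: geom_def sq_subst_mult mult_ac)
  show ?thesis
    unfolding correction_def div_xpow_def floor_log_one power_0
      U_poly_index_one[OF assms(1)] U_poly_index_one[OF assms(2)] prod shift ..
qed

lemma sum_odd_range_split:
  fixes f :: "nat \<Rightarrow> 'b::comm_monoid_add"
  assumes "h \<ge> 1"
  shows "(\<Sum>m = 1..2 * h - 1. f m) = f 1 + (\<Sum>m = 1..h - 1. f (2 * m) + f (2 * m + 1))"
  using assms
proof (induction h rule: dec_induct)
  case (step h)
  have "{1..2 * Suc h - 1} = {1..2 * h - 1} \<union> {2 * h, 2 * h + 1}"
    and "{1..Suc h - 1} = {1..h - 1} \<union> {h}"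
    using step by auto
  then show ?case using step by (simp add: add_ac)
qed simp

lemma sum_correction_double:
  fixes A B :: "'a::comm_ring_1 poly"
  assumes "degree A < 2 * h" "degree B < 2 * h"
  shows "(\<Sum>m = 1..2 * h - 1. correction (2 * h) m A B)
    = X * sq_subst ((odd_coeffs A - even_coeffs A) * (odd_coeffs B - even_coeffs B))
      + (1 + X) * sq_subst (\<Sum>m = 1..h - 1. correction h m (even_coeffs A) (even_coeffs B))
      + (1 + X) * X * sq_subst (\<Sum>m = 1..h - 1. correction h m (odd_coeffs A) (odd_coeffs B))"
proof -
  have "h \<ge> 1" using assms by simp
  then have "(\<Sum>m = 1..2 * h - 1. correction (2 * h) m A B) = correction (2 * h) 1 A B
      + (\<Sum>m = 1..h - 1. correction (2 * h) (2 * m) A B + correction (2 * h) (2 * m + 1) A B)"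
    by (rule sum_odd_range_split)
  also have "\<dots> = X * sq_subst ((odd_coeffs A - even_coeffs A) * (odd_coeffs B - even_coeffs B))
      + (\<Sum>m = 1..h - 1. (1 + X) * sq_subst (correction h m (even_coeffs A) (even_coeffs B))
        + (1 + X) * (X * sq_subst (correction h m (odd_coeffs A) (odd_coeffs B))))"
    using correction_index_one[OF assms] correction_even_index correction_odd_index
    by (intro arg_cong2[where f = "(+)"] sum.cong) auto
  finally show ?thesis
    by (simp add: sum.distrib sq_subst_sum sum_distrib_left mult.assoc add.assoc)
qed

lemma karatsuba_identity:
  fixes x e e' v v' :: "'a::comm_ring_1"
  shows "(e + x * v) * (e' + x * v')
    = (1 + x) * (e * e' + x * (v * v')) - x * ((v - e) * (v' - e'))"
  by (simp add: algebra_simps)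

lemma mult_eq_geom_termwise_minus_corrections:
  fixes A B :: "'a::comm_ring_1 poly"
  assumes "degree A < 2 ^ k" "degree B < 2 ^ k"
  shows "A * B = geom (2 ^ k) * (A \<odot> B) - (\<Sum>m = 1..2 ^ k - 1. correction (2 ^ k) m A B)"
  using assms
proof (induction k arbitrary: A B)
  case 0
  then have "degree A = 0" "degree B = 0" by auto
  then obtain a b where ab: "A = [:a:]" "B = [:b:]" by (metis degree_0_id)
  have "A * B = A \<odot> B"
    by (rule poly_eqI) (simp add: coeff_termwise ab coeff_pCons split: nat.split)
  then show ?case by (simp add: geom_def)
next
  case (Suc k)
  define h :: nat where "h = 2 ^ k"
  define EA where "EA = even_coeffs A"
  define OA where "OA = odd_coeffs A"
  define EB where "EB = even_coeffs B"
  define OB where "OB = odd_coeffs B"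
  have n: "2 ^ Suc k = 2 * h" by (simp add: h_def)
  have deg: "degree A < 2 * h" "degree B < 2 * h" using Suc.prems n by auto
  have even_IH: "EA * EB = geom h * (EA \<odot> EB) - (\<Sum>m = 1..h - 1. correction h m EA EB)"
    unfolding h_def EA_def EB_def by (rule Suc.IH) (use deg degree_even_coeffs_less h_def in auto)
  have odd_IH: "OA * OB = geom h * (OA \<odot> OB) - (\<Sum>m = 1..h - 1. correction h m OA OB)"
    unfolding h_def OA_def OB_def by (rule Suc.IH) (use deg degree_odd_coeffs_less h_def in auto)
  have "A * B = (sq_subst EA + X * sq_subst OA) * (sq_subst EB + X * sq_subst OB)"
    using even_odd_decomp[of A] even_odd_decomp[of B] by (simp add: EA_def EB_def OA_def OB_def)
  also have "\<dots> = (1 + X) * (sq_subst (EA * EB) + X * sq_subst (OA * OB))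
      - X * sq_subst ((OA - EA) * (OB - EB))"
    unfolding karatsuba_identity sq_subst_mult sq_subst_diff ..
  also have "\<dots> = geom (2 * h) * (A \<odot> B) - (\<Sum>m = 1..2 * h - 1. correction (2 * h) m A B)"
    unfolding sum_correction_double[OF deg] geom_double termwise_even_odd_decomp[of A B]
      EA_def[symmetric] EB_def[symmetric] OA_def[symmetric] OB_def[symmetric] even_IH odd_IH
    by (simp add: sq_subst_mult sq_subst_diff algebra_simps)
  finally show ?case unfolding n .
qed

theorem mainTheorem2:
  fixes A B :: "'a::comm_ring_1 poly" and n k :: nat
  assumes "n = 2 ^ k"
    and "degree A = n - 1" and "degree B = n - 1"
  shows "A * B = geom n * (A \<odot> B)
    - (\<Sum>m = 1..n - 1. div_xpow (geom (2 ^ floor_log m) * U_poly n m A * U_poly n m B) m)"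
proof -
  have "degree A < 2 ^ k" "degree B < 2 ^ k" using assms by auto
  from mult_eq_geom_termwise_minus_corrections[OF this] show ?thesis
    unfolding correction_def assms(1) .
qed

end
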